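(* Let $(M,d)$ and $(N,\rho)$ be complete pointed metric spaces. The set $\widehat{\mathrm{Lip}}_0(M,N):=\{\widehat f: f\in\mathrm{Lip}_0(M,N)\}$ is a closed subset of $\mathcal L(\mathcal F(M),\mathcal F(N))$ with respect to the weak operator topology; in particular it is also closed with respect to the strong operator topology.
   Context: A pointed metric space is a metric space with a distinguished point $0$. $\mathrm{Lip}_0(M,N)$ denotes the Lipschitz maps $f:M\to N$ with $f(0_M)=0_N$; $\mathrm{Lip}_0(M)=\mathrm{Lip}_0(M,\mathbb R)$ normed by the Lipschitz constant. $\delta_M:M\to\mathrm{Lip}_0(M)^*$, $\delta_M(x)(\varphi)=\varphi(x)$; $\mathcal F(M)$ is the norm-closed linear span of $\delta_M(M)$. For $f\in\mathrm{Lip}_0(M,N)$, $\widehat f:\mathcal F(M)\to\mathcal F(N)$ is the unique bounded linear operator with $\widehat f(\delta_M(x))=\delta_N(f(x))$. The weak operator topology on $\mathcal L(X,Y)$ is the topology of pointwise convergence of $T\mapsto\langle y^*,Tx\rangle$ for $x\in X$, $y^*\in Y^*$; the strong operator topology is that of pointwise norm convergence $T\mapsto Tx$. *)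

theory Defs
  imports "HOL-Analysis.Analysis"
begin

text \<open>Elements of the dual of Lip_0(M) are represented as functionals on real-valued
functions on M; we normalise them to vanish outside Lip_0(M).\<close>

type_synonym 'a functional = "('a \<Rightarrow> real) \<Rightarrow> real"

definition Lip0_maps :: "'a::metric_space \<Rightarrow> 'b::metric_space \<Rightarrow> ('a \<Rightarrow> 'b) set" where
  "Lip0_maps z0 w0 = {f. (\<exists>C. C-lipschitz_on UNIV f) \<and> f z0 = w0}"

definition Lip0 :: "'a::metric_space \<Rightarrow> ('a \<Rightarrow> real) set" where
  "Lip0 z0 = Lip0_maps z0 0"

definition lipnorm :: "('a::metric_space \<Rightarrow> real) \<Rightarrow> real" where
  "lipnorm f = Sup (insert 0 {\<bar>f x - f y\<bar> / dist x y | x y. x \<noteq> y})"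

definition dirac :: "'a::metric_space \<Rightarrow> 'a \<Rightarrow> 'a functional" where
  "dirac z0 x = (\<lambda>f. if f \<in> Lip0 z0 then f x else 0)"

definition molspan :: "'a::metric_space \<Rightarrow> 'a functional set" where
  "molspan z0 = {\<phi>. \<exists>A c. finite A \<and> \<phi> = (\<lambda>f. \<Sum>x\<in>A. c x * dirac z0 x f)}"

text \<open>The Lipschitz-free space F(M): the dual-norm closure of molspan inside Lip_0(M)^*.\<close>
definition free :: "'a::metric_space \<Rightarrow> 'a functional set" where
  "free z0 = {\<phi>. (\<forall>f. f \<notin> Lip0 z0 \<longrightarrow> \<phi> f = 0) \<and>
      (\<forall>\<epsilon>>0. \<exists>\<psi>\<in>molspan z0. \<forall>f\<in>Lip0 z0. \<bar>\<phi> f - \<psi> f\<bar> \<le> \<epsilon> * lipnorm f)}"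

definition fnorm :: "'a::metric_space \<Rightarrow> 'a functional \<Rightarrow> real" where
  "fnorm z0 \<phi> = Sup {\<bar>\<phi> f\<bar> | f. f \<in> Lip0 z0 \<and> lipnorm f \<le> 1}"

text \<open>Bounded linear operators F(M) -> F(N) (values outside F(M) are irrelevant).\<close>
definition bounded_op :: "'a::metric_space \<Rightarrow> 'b::metric_space
    \<Rightarrow> ('a functional \<Rightarrow> 'b functional) \<Rightarrow> bool" where
  "bounded_op z0 w0 T \<longleftrightarrow>
     (\<forall>\<phi>\<in>free z0. T \<phi> \<in> free w0) \<and>
     (\<forall>\<phi>\<in>free z0. \<forall>\<psi>\<in>free z0. \<forall>a b.
        T (\<lambda>f. a * \<phi> f + b * \<psi> f) = (\<lambda>g. a * T \<phi> g + b * T \<psi> g)) \<and>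
     (\<exists>C. \<forall>\<phi>\<in>free z0. fnorm w0 (T \<phi>) \<le> C * fnorm z0 \<phi>)"

definition free_dual :: "'b::metric_space \<Rightarrow> ('b functional \<Rightarrow> real) set" where
  "free_dual w0 = {y. (\<forall>\<phi>\<in>free w0. \<forall>\<psi>\<in>free w0. \<forall>a b.
        y (\<lambda>f. a * \<phi> f + b * \<psi> f) = a * y \<phi> + b * y \<psi>) \<and>
     (\<exists>C. \<forall>\<phi>\<in>free w0. \<bar>y \<phi>\<bar> \<le> C * fnorm w0 \<phi>)}"

text \<open>T is (on F(M)) the linearisation f-hat of f: the bounded linear operator with
  T(delta_M x) = delta_N(f x).  Such an operator is unique on F(M).\<close>
definition is_hat :: "'a::metric_space \<Rightarrow> 'b::metric_space \<Rightarrow> ('a \<Rightarrow> 'b)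
    \<Rightarrow> ('a functional \<Rightarrow> 'b functional) \<Rightarrow> bool" where
  "is_hat z0 w0 f T \<longleftrightarrow> bounded_op z0 w0 T \<and> (\<forall>x. T (dirac z0 x) = dirac w0 (f x))"

definition in_WOT_closure_hat :: "'a::metric_space \<Rightarrow> 'b::metric_space
    \<Rightarrow> ('a functional \<Rightarrow> 'b functional) \<Rightarrow> bool" where
  "in_WOT_closure_hat z0 w0 T \<longleftrightarrow>
     (\<forall>P \<epsilon>. finite P \<and> P \<subseteq> free z0 \<times> free_dual w0 \<and> \<epsilon> > 0 \<longrightarrow>
        (\<exists>f S. f \<in> Lip0_maps z0 w0 \<and> is_hat z0 w0 f S \<and>
           (\<forall>(\<phi>, y)\<in>P. \<bar>y (T \<phi>) - y (S \<phi>)\<bar> < \<epsilon>)))"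

definition in_SOT_closure_hat :: "'a::metric_space \<Rightarrow> 'b::metric_space
    \<Rightarrow> ('a functional \<Rightarrow> 'b functional) \<Rightarrow> bool" where
  "in_SOT_closure_hat z0 w0 T \<longleftrightarrow>
     (\<forall>X \<epsilon>. finite X \<and> X \<subseteq> free z0 \<and> \<epsilon> > 0 \<longrightarrow>
        (\<exists>f S. f \<in> Lip0_maps z0 w0 \<and> is_hat z0 w0 f S \<and>
           (\<forall>\<phi>\<in>X. fnorm w0 (\<lambda>g. T \<phi> g - S \<phi> g) < \<epsilon>)))"

end

theory Submission
  imports Defs
begin

text \<open>A bounded operator \<open>T\<close> that sends every \<open>\<delta>(x)\<close> to some \<open>\<delta>(f x)\<close> is the linearisation
  of \<open>f\<close>, and \<open>f\<close> is Lipschitz with constant \<open>\<parallel>T\<parallel>\<close> since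
  \<open>d(f x, f x') \<le> \<parallel>\<delta>(f x) - \<delta>(f x')\<parallel> = \<parallel>T(\<delta>(x) - \<delta>(x'))\<parallel>\<close>.  If \<open>T\<close> is a WOT-limit of
  linearisations, testing against the evaluations at \<open>g \<in> Lip\<^sub>0(N)\<close> shows that \<open>T \<delta>(x)\<close> is a weak
  limit of Dirac measures; SOT-limits are WOT-limits.

  So everything rests on \<open>\<delta>(N)\<close> being weakly closed in \<open>\<F>(N)\<close> for complete \<open>N\<close>.  For a weak
  limit \<open>\<mu>\<close> of Dirac measures, \<open>F(a) = \<mu>(d(\<cdot>, a) - d(0, a)) + d(0, a)\<close> behaves like the distance
  from a point to \<open>a\<close>: \<open>d(a, b) \<le> F(a) + F(b)\<close> and \<open>F(b) \<le> F(a) + d(a, b)\<close>.  Approximating \<open>\<mu>\<close> by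
  a finitely supported molecule gives \<open>inf F = 0\<close>, completeness then yields a zero \<open>y\<close> of \<open>F\<close>, and
  \<open>\<mu> = \<delta>(y)\<close>.\<close>

section \<open>Lipschitz functions and the Lipschitz norm\<close>

lemma Lip0I:
  assumes "\<And>x y. \<bar>f x - f y\<bar> \<le> K * dist x y" "0 \<le> K" "f z0 = 0"
  shows "f \<in> Lip0 z0"
  unfolding Lip0_def Lip0_maps_def
  using assms by (auto intro!: exI[of _ K] lipschitz_onI simp: dist_real_def)

lemma Lip0E:
  assumes "f \<in> Lip0 z0"
  obtains K where "0 \<le> K" "\<And>x y. \<bar>f x - f y\<bar> \<le> K * dist x y"
  using assms unfolding Lip0_def Lip0_maps_def
  by (auto simp: dist_real_def lipschitz_on_def)

lemma Lip0_base: "f \<in> Lip0 z0 \<Longrightarrow> f z0 = 0"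
  unfolding Lip0_def Lip0_maps_def by simp

lemma Lip0_zero: "(\<lambda>_. 0) \<in> Lip0 z0"
  by (rule Lip0I[of _ 0]) auto

lemma Lip0_cmult:
  assumes "g \<in> Lip0 z0"
  shows "(\<lambda>z. c * g z) \<in> Lip0 z0"
proof -
  obtain K where K: "0 \<le> K" "\<And>x y. \<bar>g x - g y\<bar> \<le> K * dist x y"
    using Lip0E[OF assms] by blast
  show ?thesis
  proof (rule Lip0I[of _ "\<bar>c\<bar> * K"])
    fix x y
    have "\<bar>c * g x - c * g y\<bar> = \<bar>c\<bar> * \<bar>g x - g y\<bar>"
      by (simp add: abs_mult[symmetric] right_diff_distrib)
    also have "\<dots> \<le> \<bar>c\<bar> * (K * dist x y)" by (rule mult_left_mono[OF K(2)]) auto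
    finally show "\<bar>c * g x - c * g y\<bar> \<le> \<bar>c\<bar> * K * dist x y" by simp
  qed (use K Lip0_base[OF assms] in auto)
qed

lemma bdd_above_lipnorm_quotients:
  assumes "f \<in> Lip0 z0"
  shows "bdd_above (insert 0 {\<bar>f x - f y\<bar> / dist x y | x y. x \<noteq> y})"
proof -
  obtain K where K: "0 \<le> K" "\<And>x y. \<bar>f x - f y\<bar> \<le> K * dist x y"
    using Lip0E[OF assms] by blast
  have "\<bar>f x - f y\<bar> / dist x y \<le> K" if "x \<noteq> y" for x y
    using K(2)[of x y] that by (simp add: divide_le_eq)
  then show ?thesis using K(1) by (auto intro!: bdd_aboveI[of _ K])
qed

lemma lipnorm_nonneg: "f \<in> Lip0 z0 \<Longrightarrow> 0 \<le> lipnorm f"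
  unfolding lipnorm_def by (rule cSup_upper[OF _ bdd_above_lipnorm_quotients]) auto

lemma abs_diff_le_lipnorm:
  assumes "f \<in> Lip0 z0"
  shows "\<bar>f x - f y\<bar> \<le> lipnorm f * dist x y"
proof (cases "x = y")
  case False
  have "\<bar>f x - f y\<bar> / dist x y \<le> lipnorm f"
    unfolding lipnorm_def
    by (rule cSup_upper[OF _ bdd_above_lipnorm_quotients[OF assms]]) (use False in auto)
  then show ?thesis using False by (simp add: divide_le_eq mult.commute)
qed simp

lemma abs_le_dist_base:
  assumes "f \<in> Lip0 z0" "lipnorm f \<le> 1"
  shows "\<bar>f x\<bar> \<le> dist x z0"
proof -
  have "\<bar>f x - f z0\<bar> \<le> lipnorm f * dist x z0" by (rule abs_diff_le_lipnorm[OF assms(1)])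
  also have "\<dots> \<le> 1 * dist x z0" by (rule mult_right_mono[OF assms(2)]) simp
  finally show ?thesis using Lip0_base[OF assms(1)] by simp
qed

lemma lipnorm_leI:
  assumes "\<And>x y. \<bar>f x - f y\<bar> \<le> K * dist x y" "0 \<le> K"
  shows "lipnorm f \<le> K"
  unfolding lipnorm_def
proof (rule cSup_least)
  fix r assume "r \<in> insert 0 {\<bar>f x - f y\<bar> / dist x y | x y. x \<noteq> y}"
  then show "r \<le> K" using assms by (auto simp: divide_le_eq)
qed auto

lemma lipnorm_zero: "lipnorm (\<lambda>_::'a::metric_space. 0::real) = 0"
  by (intro antisym lipnorm_leI lipnorm_nonneg[OF Lip0_zero]) auto

definition pointed_dist :: "'a::metric_space \<Rightarrow> 'a \<Rightarrow> 'a \<Rightarrow> real" where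
  "pointed_dist z0 a = (\<lambda>z. dist z a - dist z0 a)"

lemma pointed_dist_Lip0: "pointed_dist z0 a \<in> Lip0 z0"
  unfolding pointed_dist_def
  by (rule Lip0I[of _ 1]) (use abs_dist_diff_le[of _ a] in \<open>simp_all add: dist_commute\<close>)

lemma lipnorm_pointed_dist: "lipnorm (pointed_dist z0 a) \<le> 1"
  unfolding pointed_dist_def
  by (rule lipnorm_leI) (use abs_dist_diff_le[of _ a] in \<open>simp_all add: dist_commute\<close>)

section \<open>The Lipschitz-free space\<close>

lemma dirac_apply [simp]: "g \<in> Lip0 z0 \<Longrightarrow> dirac z0 x g = g x"
  by (simp add: dirac_def)

lemma dirac_base: "dirac z0 z0 = (\<lambda>_. 0)"
  by (rule ext) (simp add: dirac_def Lip0_base)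

lemma dirac_inj:
  assumes "dirac z0 a = dirac z0 b"
  shows "a = b"
proof -
  have "dirac z0 a (pointed_dist z0 b) = dirac z0 b (pointed_dist z0 b)" using assms by simp
  then show ?thesis by (simp add: pointed_dist_Lip0) (simp add: pointed_dist_def)
qed

lemma dirac_in_molspan: "dirac z0 x \<in> molspan z0"
  unfolding molspan_def by (intro CollectI exI[of _ "{x}"] exI[of _ "\<lambda>_. 1"]) auto

lemma molspan_lincomb:
  assumes "\<phi> \<in> molspan z0" "\<psi> \<in> molspan z0"
  shows "(\<lambda>f. a * \<phi> f + b * \<psi> f) \<in> molspan z0"
proof -
  obtain A c where A: "finite A" "\<phi> = (\<lambda>f. \<Sum>x\<in>A. c x * dirac z0 x f)"
    using assms(1) unfolding molspan_def by auto
  obtain B d where B: "finite B" "\<psi> = (\<lambda>f. \<Sum>x\<in>B. d x * dirac z0 x f)"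
    using assms(2) unfolding molspan_def by auto
  define c' where "c' x = (if x \<in> A then c x else 0)" for x
  define d' where "d' x = (if x \<in> B then d x else 0)" for x
  have \<phi>: "(\<Sum>x\<in>A \<union> B. c' x * dirac z0 x f) = \<phi> f" for f
    unfolding A(2) c'_def using A(1) B(1) by (intro sum.mono_neutral_cong_right) auto
  have \<psi>: "(\<Sum>x\<in>A \<union> B. d' x * dirac z0 x f) = \<psi> f" for f
    unfolding B(2) d'_def using A(1) B(1) by (intro sum.mono_neutral_cong_right) auto
  have "a * \<phi> f + b * \<psi> f = (\<Sum>x\<in>A \<union> B. (a * c' x + b * d' x) * dirac z0 x f)" for f
    unfolding \<phi>[symmetric] \<psi>[symmetric] by (simp add: sum_distrib_left sum.distrib algebra_simps)
  then show ?thesis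
    unfolding molspan_def using A(1) B(1)
    by (intro CollectI exI[of _ "A \<union> B"] exI[of _ "\<lambda>x. a * c' x + b * d' x"]) auto
qed

lemma dirac_in_free: "dirac z0 x \<in> free z0"
  unfolding free_def
proof (intro CollectI conjI allI impI)
  fix e :: real assume "0 < e"
  then show "\<exists>\<psi>\<in>molspan z0. \<forall>f\<in>Lip0 z0. \<bar>dirac z0 x f - \<psi> f\<bar> \<le> e * lipnorm f"
    by (intro bexI[OF _ dirac_in_molspan[of z0 x]]) (auto intro!: mult_nonneg_nonneg lipnorm_nonneg)
qed (auto simp: dirac_def)

lemma free_outside_Lip0: "\<phi> \<in> free z0 \<Longrightarrow> f \<notin> Lip0 z0 \<Longrightarrow> \<phi> f = 0"
  unfolding free_def by auto

lemma free_approx_molecule: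
  assumes "\<phi> \<in> free z0" "e > 0"
  obtains A c where "finite A"
    "\<And>f. f \<in> Lip0 z0 \<Longrightarrow> \<bar>\<phi> f - (\<Sum>x\<in>A. c x * f x)\<bar> \<le> e * lipnorm f"
proof -
  obtain \<psi> where "\<psi> \<in> molspan z0" "\<forall>f\<in>Lip0 z0. \<bar>\<phi> f - \<psi> f\<bar> \<le> e * lipnorm f"
    using assms unfolding free_def by auto
  then obtain A c where "finite A" "\<psi> = (\<lambda>f. \<Sum>x\<in>A. c x * dirac z0 x f)"
    "\<forall>f\<in>Lip0 z0. \<bar>\<phi> f - \<psi> f\<bar> \<le> e * lipnorm f"
    unfolding molspan_def by auto
  then show ?thesis using that[of A c] by auto
qed

lemma free_lincomb:
  assumes "\<phi> \<in> free z0" "\<psi> \<in> free z0"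
  shows "(\<lambda>f. a * \<phi> f + b * \<psi> f) \<in> free z0"
  unfolding free_def
proof (intro CollectI conjI allI impI)
  fix f assume "f \<notin> Lip0 z0"
  then show "a * \<phi> f + b * \<psi> f = 0" using assms by (simp add: free_outside_Lip0)
next
  fix e :: real assume "0 < e"
  define e' where "e' = e / (\<bar>a\<bar> + \<bar>b\<bar> + 1)"
  have "e' > 0" using \<open>0 < e\<close> unfolding e'_def by (simp add: add_pos_nonneg)
  obtain \<kappa>1 where \<kappa>1: "\<kappa>1 \<in> molspan z0" "\<forall>f\<in>Lip0 z0. \<bar>\<phi> f - \<kappa>1 f\<bar> \<le> e' * lipnorm f"
    using assms(1) \<open>e' > 0\<close> unfolding free_def by blast
  obtain \<kappa>2 where \<kappa>2: "\<kappa>2 \<in> molspan z0" "\<forall>f\<in>Lip0 z0. \<bar>\<psi> f - \<kappa>2 f\<bar> \<le> e' * lipnorm f"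
    using assms(2) \<open>e' > 0\<close> unfolding free_def by blast
  show "\<exists>\<kappa>\<in>molspan z0. \<forall>f\<in>Lip0 z0. \<bar>a * \<phi> f + b * \<psi> f - \<kappa> f\<bar> \<le> e * lipnorm f"
  proof (intro bexI[OF _ molspan_lincomb[OF \<kappa>1(1) \<kappa>2(1), of a b]] ballI)
    fix f assume f: "f \<in> Lip0 z0"
    have "\<bar>a * \<phi> f + b * \<psi> f - (a * \<kappa>1 f + b * \<kappa>2 f)\<bar>
        \<le> \<bar>a\<bar> * \<bar>\<phi> f - \<kappa>1 f\<bar> + \<bar>b\<bar> * \<bar>\<psi> f - \<kappa>2 f\<bar>"
      by (simp add: abs_mult[symmetric] algebra_simps)
    also have "\<dots> \<le> (\<bar>a\<bar> + \<bar>b\<bar>) * e' * lipnorm f"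
      using \<kappa>1(2) \<kappa>2(2) f by (simp add: distrib_right add_mono mult_left_mono mult.assoc)
    also have "\<dots> \<le> e * lipnorm f"
      using \<open>0 < e\<close> lipnorm_nonneg[OF f] unfolding e'_def
      by (intro mult_right_mono) (simp_all add: field_simps)
    finally show "\<bar>a * \<phi> f + b * \<psi> f - (a * \<kappa>1 f + b * \<kappa>2 f)\<bar> \<le> e * lipnorm f" .
  qed
qed

lemma free_diff: "\<phi> \<in> free z0 \<Longrightarrow> \<psi> \<in> free z0 \<Longrightarrow> (\<lambda>f. \<phi> f - \<psi> f) \<in> free z0"
  using free_lincomb[of \<phi> z0 \<psi> 1 "-1"] by simp

text \<open>Elements of the free space are only approximately molecules, so even homogeneity
  in the test function has to be recovered by an \<open>\<epsilon>\<close>-argument.\<close>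

lemma free_cmult:
  assumes "\<phi> \<in> free z0" "g \<in> Lip0 z0"
  shows "\<phi> (\<lambda>z. c * g z) = c * \<phi> g"
proof -
  let ?cg = "\<lambda>z. c * g z"
  have cg: "?cg \<in> Lip0 z0" by (rule Lip0_cmult[OF assms(2)])
  define K where "K = lipnorm ?cg + \<bar>c\<bar> * lipnorm g"
  have K: "0 \<le> K" unfolding K_def using lipnorm_nonneg[OF cg] lipnorm_nonneg[OF assms(2)] by simp
  have "\<bar>\<phi> ?cg - c * \<phi> g\<bar> \<le> e" if "e > 0" for e
  proof -
    define e' where "e' = e / (K + 1)"
    have "e' > 0" using \<open>e > 0\<close> K unfolding e'_def by simp
    then obtain A a where "finite A"
      and A: "\<And>f. f \<in> Lip0 z0 \<Longrightarrow> \<bar>\<phi> f - (\<Sum>x\<in>A. a x * f x)\<bar> \<le> e' * lipnorm f"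
      using free_approx_molecule[OF assms(1) \<open>e' > 0\<close>] by blast
    have "(\<Sum>x\<in>A. a x * ?cg x) = c * (\<Sum>x\<in>A. a x * g x)"
      by (simp add: sum_distrib_left algebra_simps)
    then have "\<bar>\<phi> ?cg - c * \<phi> g\<bar>
        \<le> \<bar>\<phi> ?cg - (\<Sum>x\<in>A. a x * ?cg x)\<bar> + \<bar>c\<bar> * \<bar>\<phi> g - (\<Sum>x\<in>A. a x * g x)\<bar>"
      by (simp add: abs_mult[symmetric] algebra_simps abs_triangle_ineq4)
    also have "\<dots> \<le> e' * lipnorm ?cg + \<bar>c\<bar> * (e' * lipnorm g)"
      by (intro add_mono mult_left_mono A cg assms(2)) auto
    also have "\<dots> = e' * K" unfolding K_def by (simp add: algebra_simps)
    also have "\<dots> \<le> e" using \<open>e > 0\<close> K unfolding e'_def by (simp add: field_simps)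
    finally show ?thesis .
  qed
  then show ?thesis using field_le_epsilon[of "\<bar>\<phi> ?cg - c * \<phi> g\<bar>" 0] by fastforce
qed

lemma bdd_above_free_values:
  assumes "\<phi> \<in> free z0"
  shows "bdd_above {\<bar>\<phi> f\<bar> | f. f \<in> Lip0 z0 \<and> lipnorm f \<le> 1}"
proof -
  obtain A a where "finite A"
    and A: "\<And>f. f \<in> Lip0 z0 \<Longrightarrow> \<bar>\<phi> f - (\<Sum>x\<in>A. a x * f x)\<bar> \<le> 1 * lipnorm f"
    using free_approx_molecule[OF assms zero_less_one] by blast
  have "\<bar>\<phi> f\<bar> \<le> (\<Sum>x\<in>A. \<bar>a x\<bar> * dist x z0) + 1" if f: "f \<in> Lip0 z0" "lipnorm f \<le> 1" for f
  proof -
    have "\<bar>\<Sum>x\<in>A. a x * f x\<bar> \<le> (\<Sum>x\<in>A. \<bar>a x\<bar> * dist x z0)"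
      using abs_le_dist_base[OF f]
      by (intro order.trans[OF sum_abs] sum_mono) (auto simp: abs_mult intro: mult_left_mono)
    moreover have "\<bar>\<phi> f - (\<Sum>x\<in>A. a x * f x)\<bar> \<le> 1" using A[OF f(1)] f(2) by simp
    ultimately show ?thesis by linarith
  qed
  then show ?thesis by (auto intro!: bdd_aboveI)
qed

lemma abs_le_fnorm:
  assumes "\<phi> \<in> free z0" "f \<in> Lip0 z0" "lipnorm f \<le> 1"
  shows "\<bar>\<phi> f\<bar> \<le> fnorm z0 \<phi>"
  unfolding fnorm_def
  by (rule cSup_upper[OF _ bdd_above_free_values[OF assms(1)]]) (use assms in auto)

lemma fnorm_nonneg:
  assumes "\<phi> \<in> free z0"
  shows "0 \<le> fnorm z0 \<phi>"
proof -
  have "\<bar>\<phi> (\<lambda>_. 0)\<bar> \<le> fnorm z0 \<phi>"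
    by (rule abs_le_fnorm[OF assms Lip0_zero]) (simp add: lipnorm_zero)
  then show ?thesis by linarith
qed

lemma fnorm_le:
  assumes "\<And>f. f \<in> Lip0 z0 \<Longrightarrow> lipnorm f \<le> 1 \<Longrightarrow> \<bar>\<phi> f\<bar> \<le> K"
  shows "fnorm z0 \<phi> \<le> K"
  unfolding fnorm_def
proof (rule cSup_least)
  have "\<bar>\<phi> (\<lambda>_. 0)\<bar> \<in> {\<bar>\<phi> f\<bar> |f. f \<in> Lip0 z0 \<and> lipnorm f \<le> 1}"
    by (intro CollectI exI[of _ "\<lambda>_. 0"]) (simp add: Lip0_zero lipnorm_zero)
  then show "{\<bar>\<phi> f\<bar> |f. f \<in> Lip0 z0 \<and> lipnorm f \<le> 1} \<noteq> {}" by blast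
qed (use assms in blast)

lemma abs_le_lipnorm_fnorm:
  assumes "\<phi> \<in> free z0" "g \<in> Lip0 z0"
  shows "\<bar>\<phi> g\<bar> \<le> lipnorm g * fnorm z0 \<phi>"
proof (cases "lipnorm g = 0")
  case True
  have "g = (\<lambda>z. 0 * g z)"
    using abs_diff_le_lipnorm[OF assms(2), of _ z0] True Lip0_base[OF assms(2)] by auto
  then show ?thesis
    using free_cmult[OF assms, of 0] fnorm_nonneg[OF assms(1)] by (simp add: lipnorm_zero)
next
  case False
  define L where "L = lipnorm g"
  have L: "L > 0" using False lipnorm_nonneg[OF assms(2)] unfolding L_def by simp
  let ?g = "\<lambda>z. (1 / L) * g z"
  have "lipnorm ?g \<le> 1"
  proof (rule lipnorm_leI)
    fix x y
    have "\<bar>?g x - ?g y\<bar> = \<bar>g x - g y\<bar> / L" using L by (simp add: field_simps abs_div)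
    also have "\<dots> \<le> 1 * dist x y"
      using abs_diff_le_lipnorm[OF assms(2), of x y] L unfolding L_def
      by (simp add: divide_le_eq algebra_simps)
    finally show "\<bar>?g x - ?g y\<bar> \<le> 1 * dist x y" .
  qed simp
  then have "\<bar>\<phi> ?g\<bar> \<le> fnorm z0 \<phi>" by (rule abs_le_fnorm[OF assms(1) Lip0_cmult[OF assms(2)]])
  moreover have "\<phi> ?g = (1 / L) * \<phi> g" by (rule free_cmult[OF assms])
  ultimately have "\<bar>\<phi> g\<bar> / L \<le> fnorm z0 \<phi>" using L by (simp add: abs_mult)
  then show ?thesis using L unfolding L_def by (simp add: divide_le_eq mult.commute)
qed

lemma eval_in_free_dual: "g \<in> Lip0 z0 \<Longrightarrow> (\<lambda>\<phi>. \<phi> g) \<in> free_dual z0"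
  unfolding free_dual_def using abs_le_lipnorm_fnorm by blast

lemma free_dual_diff:
  assumes "y \<in> free_dual z0" "\<phi> \<in> free z0" "\<psi> \<in> free z0"
  shows "y (\<lambda>f. \<phi> f - \<psi> f) = y \<phi> - y \<psi>"
proof -
  have "y (\<lambda>f. 1 * \<phi> f + (-1) * \<psi> f) = 1 * y \<phi> + (-1) * y \<psi>"
    using assms unfolding free_dual_def by blast
  then show ?thesis by simp
qed

lemma free_dual_bound:
  assumes "y \<in> free_dual w0"
  obtains C where "0 \<le> C" "\<And>\<psi>. \<psi> \<in> free w0 \<Longrightarrow> \<bar>y \<psi>\<bar> \<le> C * fnorm w0 \<psi>"
proof -
  obtain C where C: "\<And>\<psi>. \<psi> \<in> free w0 \<Longrightarrow> \<bar>y \<psi>\<bar> \<le> C * fnorm w0 \<psi>"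
    using assms unfolding free_dual_def by blast
  have "\<bar>y \<psi>\<bar> \<le> max C 0 * fnorm w0 \<psi>" if "\<psi> \<in> free w0" for \<psi>
    using C[OF that] mult_right_mono[OF max.cobounded1[of C 0] fnorm_nonneg[OF that]] by linarith
  then show ?thesis using that[of "max C 0"] by simp
qed

lemma fnorm_dirac_diff_le: "fnorm z0 (\<lambda>f. dirac z0 x f - dirac z0 x' f) \<le> dist x x'"
proof (rule fnorm_le)
  fix g assume "g \<in> Lip0 z0" "lipnorm g \<le> 1"
  then show "\<bar>dirac z0 x g - dirac z0 x' g\<bar> \<le> dist x x'"
    using abs_diff_le_lipnorm[of g z0 x x'] mult_right_mono[of "lipnorm g" 1 "dist x x'"] by simp
qed

lemma dist_le_fnorm_dirac_diff: "dist a b \<le> fnorm z0 (\<lambda>f. dirac z0 a f - dirac z0 b f)"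
  using abs_le_fnorm[OF free_diff[OF dirac_in_free dirac_in_free] pointed_dist_Lip0
      lipnorm_pointed_dist, of z0 a b b] pointed_dist_Lip0[of z0 b]
  by (simp add: pointed_dist_def)

section \<open>Weak closedness of the Dirac image\<close>

text \<open>\<open>\<mu>\<close> lies in the weak closure of \<open>\<delta>(M)\<close>, the test functions being
  \<open>Lip\<^sub>0(M) = \<F>(M)\<^sup>*\<close>.\<close>

definition weakly_dirac_approximable :: "'a::metric_space \<Rightarrow> 'a functional \<Rightarrow> bool" where
  "weakly_dirac_approximable z0 \<mu> \<longleftrightarrow>
     (\<forall>G \<epsilon>. finite G \<and> G \<subseteq> Lip0 z0 \<and> \<epsilon> > 0 \<longrightarrow> (\<exists>y. \<forall>g\<in>G. \<bar>\<mu> g - g y\<bar> < \<epsilon>))"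

lemma weakly_dirac_approximableD:
  assumes "weakly_dirac_approximable z0 \<mu>" "finite G" "G \<subseteq> Lip0 z0" "\<epsilon> > 0"
  obtains y where "\<And>g. g \<in> G \<Longrightarrow> \<bar>\<mu> g - g y\<bar> < \<epsilon>"
proof -
  have "\<exists>y. \<forall>g\<in>G. \<bar>\<mu> g - g y\<bar> < \<epsilon>"
    using assms(1) unfolding weakly_dirac_approximable_def using assms(2-4) by simp
  then show ?thesis using that by blast
qed

text \<open>For \<open>\<mu> = \<delta>(y)\<close> this is \<open>dist y a\<close>: the distance from the point that \<open>\<mu>\<close> will turn out
  to be to \<open>a\<close>.\<close>

definition dist_profile :: "'a::metric_space \<Rightarrow> 'a functional \<Rightarrow> 'a \<Rightarrow> real" where
  "dist_profile z0 \<mu> a = \<mu> (pointed_dist z0 a) + dist z0 a"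

lemma dist_profile_approx:
  assumes "weakly_dirac_approximable z0 \<mu>" "finite B" "\<epsilon> > 0"
  shows "\<exists>y. \<forall>a\<in>B. \<bar>dist_profile z0 \<mu> a - dist y a\<bar> < \<epsilon>"
proof -
  obtain y where y: "\<And>g. g \<in> pointed_dist z0 ` B \<Longrightarrow> \<bar>\<mu> g - g y\<bar> < \<epsilon>"
    using weakly_dirac_approximableD[OF assms(1) _ _ assms(3), of "pointed_dist z0 ` B"]
      assms(2) pointed_dist_Lip0 by blast
  have "\<bar>dist_profile z0 \<mu> a - dist y a\<bar> < \<epsilon>" if "a \<in> B" for a
    using y[of "pointed_dist z0 a"] that by (simp add: dist_profile_def pointed_dist_def)
  then show ?thesis by blast
qed

lemma dist_le_dist_profile_add:
  assumes "weakly_dirac_approximable z0 \<mu>"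
  shows "dist a b \<le> dist_profile z0 \<mu> a + dist_profile z0 \<mu> b"
proof (rule field_le_epsilon)
  fix e :: real assume "0 < e"
  then obtain y where y: "\<forall>c\<in>{a, b}. \<bar>dist_profile z0 \<mu> c - dist y c\<bar> < e / 2"
    using dist_profile_approx[OF assms, of "{a, b}" "e / 2"] by auto
  then have "\<bar>dist_profile z0 \<mu> a - dist y a\<bar> < e / 2" "\<bar>dist_profile z0 \<mu> b - dist y b\<bar> < e / 2"
    by auto
  moreover have "dist a b \<le> dist y a + dist y b" by (rule dist_triangle3)
  ultimately show "dist a b \<le> dist_profile z0 \<mu> a + dist_profile z0 \<mu> b + e" by linarith
qed

lemma dist_profile_le_add_dist:
  assumes "weakly_dirac_approximable z0 \<mu>"
  shows "dist_profile z0 \<mu> b \<le> dist_profile z0 \<mu> a + dist a b"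
proof (rule field_le_epsilon)
  fix e :: real assume "0 < e"
  then obtain y where y: "\<forall>c\<in>{a, b}. \<bar>dist_profile z0 \<mu> c - dist y c\<bar> < e / 2"
    using dist_profile_approx[OF assms, of "{a, b}" "e / 2"] by auto
  then have "\<bar>dist_profile z0 \<mu> a - dist y a\<bar> < e / 2" "\<bar>dist_profile z0 \<mu> b - dist y b\<bar> < e / 2"
    by auto
  moreover have "dist y b \<le> dist y a + dist a b" by (rule dist_triangle)
  ultimately show "dist_profile z0 \<mu> b \<le> dist_profile z0 \<mu> a + dist a b + e" by linarith
qed

text \<open>Approximate \<open>\<mu>\<close> by a molecule supported on a finite set \<open>B\<close>; the distance to \<open>B\<close>
  vanishes on the support, so \<open>\<mu>\<close> nearly annihilates it, which forces the approximating points
  \<open>y\<close> close to some \<open>a \<in> B\<close>.\<close>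

lemma dist_profile_arbitrarily_small:
  assumes "\<mu> \<in> free z0" "weakly_dirac_approximable z0 \<mu>" "\<epsilon> > 0"
  shows "\<exists>a. dist_profile z0 \<mu> a < \<epsilon>"
proof -
  define e where "e = \<epsilon> / 3"
  have "e > 0" using assms(3) unfolding e_def by simp
  then obtain A c where "finite A"
    and A: "\<And>f. f \<in> Lip0 z0 \<Longrightarrow> \<bar>\<mu> f - (\<Sum>x\<in>A. c x * f x)\<bar> \<le> e * lipnorm f"
    using free_approx_molecule[OF assms(1)] by blast
  define B where "B = insert z0 A"
  have B: "finite B" "B \<noteq> {}" using \<open>finite A\<close> unfolding B_def by auto
  define h where "h z = infdist z B" for z
  have h: "h \<in> Lip0 z0"
    unfolding h_def by (rule Lip0I[of _ 1]) (auto simp: infdist_triangle_abs B_def)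
  have "lipnorm h \<le> 1"
    unfolding h_def by (rule lipnorm_leI) (auto simp: infdist_triangle_abs)
  then have "e * lipnorm h \<le> e" using \<open>e > 0\<close> by (simp add: mult_left_le)
  moreover have "(\<Sum>x\<in>A. c x * h x) = 0" unfolding h_def B_def by (intro sum.neutral) auto
  ultimately have "\<bar>\<mu> h\<bar> \<le> e" using A[OF h] by simp
  obtain y where y: "\<And>g. g \<in> insert h (pointed_dist z0 ` B) \<Longrightarrow> \<bar>\<mu> g - g y\<bar> < e"
    using weakly_dirac_approximableD[OF assms(2) _ _ \<open>e > 0\<close>,
        of "insert h (pointed_dist z0 ` B)"] B(1) h pointed_dist_Lip0 by blast
  have "infdist y B < 2 * e" using y[of h] \<open>\<bar>\<mu> h\<bar> \<le> e\<close> unfolding h_def by auto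
  then obtain a where a: "a \<in> B" "dist y a < 2 * e"
    using B(2) by (auto simp: infdist_notempty cINF_less_iff bdd_below_image_dist)
  have "\<bar>\<mu> (pointed_dist z0 a) - pointed_dist z0 a y\<bar> < e" using y a(1) by blast
  then have "dist_profile z0 \<mu> a < dist y a + e"
    unfolding dist_profile_def pointed_dist_def by auto
  then have "dist_profile z0 \<mu> a < \<epsilon>" using a(2) unfolding e_def by linarith
  then show ?thesis ..
qed

lemma dist_dominating_function_has_zero:
  fixes F :: "'a::complete_space \<Rightarrow> real"
  assumes dist_le: "\<And>a b. dist a b \<le> F a + F b"
    and lip: "\<And>a b. F b \<le> F a + dist a b"
    and small: "\<And>\<epsilon>. \<epsilon> > 0 \<Longrightarrow> \<exists>a. F a < \<epsilon>"
  shows "\<exists>y. F y = 0"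
proof -
  have F_nonneg: "0 \<le> F a" for a using dist_le[of a a] by simp
  have "\<forall>n. \<exists>x. F x < inverse (real (Suc n))" using small by simp
  then obtain a where a: "\<And>n. F (a n) < inverse (real (Suc n))" by metis
  have "Cauchy a"
  proof (rule metric_CauchyI)
    fix e :: real assume "0 < e"
    then obtain M where M: "inverse (real (Suc M)) < e / 2"
      using reals_Archimedean[of "e / 2"] by auto
    have tail: "F (a n) < e / 2" if "n \<ge> M" for n
    proof -
      have "inverse (real (Suc n)) \<le> inverse (real (Suc M))" using that by (simp add: field_simps)
      then show ?thesis using a[of n] M by linarith
    qed
    then have "dist (a m) (a n) < e" if "m \<ge> M" "n \<ge> M" for m n
      using dist_le[of "a m" "a n"] tail[OF that(1)] tail[OF that(2)] by linarith
    then show "\<exists>M. \<forall>m\<ge>M. \<forall>n\<ge>M. dist (a m) (a n) < e" by blast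
  qed
  then obtain y where y: "a \<longlonglongrightarrow> y" using Cauchy_convergent_iff convergent_def by blast
  have "(\<lambda>n. F (a n)) \<longlonglongrightarrow> 0"
  proof (rule tendsto_sandwich[OF _ _ tendsto_const LIMSEQ_inverse_real_of_nat])
    show "\<forall>\<^sub>F n in sequentially. 0 \<le> F (a n)" by (simp add: F_nonneg)
    show "\<forall>\<^sub>F n in sequentially. F (a n) \<le> inverse (real (Suc n))"
      using a by (intro always_eventually allI less_imp_le)
  qed
  moreover have "(\<lambda>n. dist (a n) y) \<longlonglongrightarrow> 0" using tendsto_dist_iff y by blast
  ultimately have "(\<lambda>n. F (a n) + dist (a n) y) \<longlonglongrightarrow> 0" using tendsto_add by fastforce
  moreover have "\<exists>N. \<forall>n\<ge>N. F y \<le> F (a n) + dist (a n) y" using lip by blast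
  ultimately have "F y \<le> 0" by (rule LIMSEQ_le_const)
  then show ?thesis using F_nonneg[of y] by auto
qed

lemma dist_profile_zero_imp_dirac:
  assumes "\<mu> \<in> free z0" "weakly_dirac_approximable z0 \<mu>" "dist_profile z0 \<mu> y0 = 0"
  shows "\<mu> = dirac z0 y0"
proof
  fix g
  show "\<mu> g = dirac z0 y0 g"
  proof (cases "g \<in> Lip0 z0")
    case False
    then show ?thesis using assms(1) by (simp add: free_outside_Lip0 dirac_def)
  next
    case True
    obtain K where K: "0 \<le> K" "\<And>x y. \<bar>g x - g y\<bar> \<le> K * dist x y" using Lip0E[OF True] by blast
    have "\<bar>\<mu> g - g y0\<bar> \<le> e" if "e > 0" for e
    proof -
      define e' where "e' = e / (K + 1)"
      have "e' > 0" using \<open>e > 0\<close> K unfolding e'_def by simp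
      then obtain y where y: "\<And>f. f \<in> {g, pointed_dist z0 y0} \<Longrightarrow> \<bar>\<mu> f - f y\<bar> < e'"
        using weakly_dirac_approximableD[OF assms(2), of "{g, pointed_dist z0 y0}"]
          True pointed_dist_Lip0 by blast
      have "dist y y0 < e'"
        using y[of "pointed_dist z0 y0"] assms(3) by (simp add: dist_profile_def pointed_dist_def)
      then have "\<bar>g y - g y0\<bar> \<le> K * e'"
        using K by (meson less_imp_le mult_left_mono order_trans)
      moreover have "\<bar>\<mu> g - g y\<bar> < e'" using y by blast
      moreover have "K * e' + e' = e"
      proof -
        have "K * e' + e' = (K + 1) * e'" by (simp add: algebra_simps)
        also have "\<dots> = e" unfolding e'_def using K(1) by simp
        finally show ?thesis .
      qed
      ultimately show ?thesis by linarith
    qed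
    then show ?thesis using True field_le_epsilon[of "\<bar>\<mu> g - g y0\<bar>" 0] by fastforce
  qed
qed

theorem weakly_dirac_approximable_imp_dirac:
  fixes z0 :: "'a::complete_space"
  assumes "\<mu> \<in> free z0" "weakly_dirac_approximable z0 \<mu>"
  shows "\<exists>y. \<mu> = dirac z0 y"
proof -
  have "\<exists>y. dist_profile z0 \<mu> y = 0"
    by (rule dist_dominating_function_has_zero[OF dist_le_dist_profile_add[OF assms(2)]
          dist_profile_le_add_dist[OF assms(2)] dist_profile_arbitrarily_small[OF assms]])
  then show ?thesis using dist_profile_zero_imp_dirac[OF assms] by blast
qed

section \<open>Operators that map Dirac measures to Dirac measures\<close>

lemma bounded_op_free: "bounded_op z0 w0 T \<Longrightarrow> \<phi> \<in> free z0 \<Longrightarrow> T \<phi> \<in> free w0"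
  unfolding bounded_op_def by blast

lemma bounded_op_diff:
  assumes "bounded_op z0 w0 T" "\<phi> \<in> free z0" "\<psi> \<in> free z0"
  shows "T (\<lambda>f. \<phi> f - \<psi> f) = (\<lambda>g. T \<phi> g - T \<psi> g)"
proof -
  have "T (\<lambda>f. 1 * \<phi> f + (-1) * \<psi> f) = (\<lambda>g. 1 * T \<phi> g + (-1) * T \<psi> g)"
    using assms unfolding bounded_op_def by blast
  then show ?thesis by simp
qed

lemma bounded_op_bound:
  assumes "bounded_op z0 w0 T"
  obtains C where "0 \<le> C" "\<And>\<phi>. \<phi> \<in> free z0 \<Longrightarrow> fnorm w0 (T \<phi>) \<le> C * fnorm z0 \<phi>"
proof -
  obtain C where C: "\<And>\<phi>. \<phi> \<in> free z0 \<Longrightarrow> fnorm w0 (T \<phi>) \<le> C * fnorm z0 \<phi>"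
    using assms unfolding bounded_op_def by blast
  have "fnorm w0 (T \<phi>) \<le> max C 0 * fnorm z0 \<phi>" if "\<phi> \<in> free z0" for \<phi>
    using C[OF that] mult_right_mono[OF max.cobounded1[of C 0] fnorm_nonneg[OF that]] by linarith
  then show ?thesis using that[of "max C 0"] by simp
qed

lemma dirac_preserving_map_Lip0:
  assumes T: "bounded_op z0 w0 T" and f: "\<And>x. T (dirac z0 x) = dirac w0 (f x)"
  shows "f \<in> Lip0_maps z0 w0"
proof -
  obtain C where "0 \<le> C" and C: "\<And>\<phi>. \<phi> \<in> free z0 \<Longrightarrow> fnorm w0 (T \<phi>) \<le> C * fnorm z0 \<phi>"
    using bounded_op_bound[OF T] by blast
  have "dist (f x) (f x') \<le> C * dist x x'" for x x'
  proof -
    let ?\<delta> = "\<lambda>f. dirac z0 x f - dirac z0 x' f"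
    have "dist (f x) (f x') \<le> fnorm w0 (T ?\<delta>)"
      using dist_le_fnorm_dirac_diff by (simp add: bounded_op_diff[OF T dirac_in_free dirac_in_free] f)
    also have "\<dots> \<le> C * fnorm z0 ?\<delta>" by (rule C[OF free_diff[OF dirac_in_free dirac_in_free]])
    also have "\<dots> \<le> C * dist x x'" by (rule mult_left_mono[OF fnorm_dirac_diff_le \<open>0 \<le> C\<close>])
    finally show ?thesis .
  qed
  moreover have "f z0 = w0"
  proof (rule dirac_inj)
    have "T (\<lambda>_. 0) = (\<lambda>_. 0)"
      using bounded_op_diff[OF T dirac_in_free dirac_in_free, of z0 z0] by simp
    then show "dirac w0 (f z0) = dirac w0 w0" using f[of z0] by (simp add: dirac_base)
  qed
  ultimately show ?thesis
    unfolding Lip0_maps_def using \<open>0 \<le> C\<close> by (auto intro!: exI[of _ C] lipschitz_onI)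
qed

lemma dirac_preserving_op_is_hat:
  assumes T: "bounded_op z0 w0 T" and dirac: "\<And>x. \<exists>y. T (dirac z0 x) = dirac w0 y"
  shows "\<exists>f\<in>Lip0_maps z0 w0. is_hat z0 w0 f T"
proof -
  obtain f where f: "\<And>x. T (dirac z0 x) = dirac w0 (f x)" using dirac by metis
  then show ?thesis using dirac_preserving_map_Lip0[OF T f] T unfolding is_hat_def by blast
qed

section \<open>Closures of the set of linearisations\<close>

lemma is_hat_bounded_op: "is_hat z0 w0 f S \<Longrightarrow> bounded_op z0 w0 S"
  unfolding is_hat_def by blast

lemma is_hat_dirac: "is_hat z0 w0 f S \<Longrightarrow> S (dirac z0 x) = dirac w0 (f x)"
  unfolding is_hat_def by blast

lemma in_WOT_closure_hatD:
  assumes "in_WOT_closure_hat z0 w0 T" "finite P" "P \<subseteq> free z0 \<times> free_dual w0" "\<epsilon> > 0"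
  obtains f S where "f \<in> Lip0_maps z0 w0" "is_hat z0 w0 f S"
    "\<And>\<phi> y. (\<phi>, y) \<in> P \<Longrightarrow> \<bar>y (T \<phi>) - y (S \<phi>)\<bar> < \<epsilon>"
proof -
  have "\<exists>f S. f \<in> Lip0_maps z0 w0 \<and> is_hat z0 w0 f S \<and>
      (\<forall>(\<phi>, y)\<in>P. \<bar>y (T \<phi>) - y (S \<phi>)\<bar> < \<epsilon>)"
    using assms unfolding in_WOT_closure_hat_def by (elim allE[of _ P] allE[of _ \<epsilon>] impE) auto
  then show ?thesis using that by fast
qed

lemma in_SOT_closure_hatD:
  assumes "in_SOT_closure_hat z0 w0 T" "finite X" "X \<subseteq> free z0" "\<epsilon> > 0"
  obtains f S where "f \<in> Lip0_maps z0 w0" "is_hat z0 w0 f S"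
    "\<And>\<phi>. \<phi> \<in> X \<Longrightarrow> fnorm w0 (\<lambda>g. T \<phi> g - S \<phi> g) < \<epsilon>"
proof -
  have "\<exists>f S. f \<in> Lip0_maps z0 w0 \<and> is_hat z0 w0 f S \<and>
      (\<forall>\<phi>\<in>X. fnorm w0 (\<lambda>g. T \<phi> g - S \<phi> g) < \<epsilon>)"
    using assms unfolding in_SOT_closure_hat_def by (elim allE[of _ X] allE[of _ \<epsilon>] impE) auto
  then show ?thesis using that by fast
qed

lemma WOT_closure_hat_dirac_approximable:
  assumes "in_WOT_closure_hat z0 w0 T"
  shows "weakly_dirac_approximable w0 (T (dirac z0 x))"
  unfolding weakly_dirac_approximable_def
proof (intro allI impI; elim conjE)
  fix G and \<epsilon> :: real assume G: "finite G" "G \<subseteq> Lip0 w0" and "\<epsilon> > 0"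
  define P where "P = (\<lambda>g. (dirac z0 x, \<lambda>\<phi>::'b functional. \<phi> g)) ` G"
  have "finite P" unfolding P_def using G(1) by simp
  moreover have "P \<subseteq> free z0 \<times> free_dual w0"
    unfolding P_def using G(2) dirac_in_free eval_in_free_dual by blast
  ultimately obtain f S where "f \<in> Lip0_maps z0 w0" "is_hat z0 w0 f S"
    and S: "\<And>\<phi> y. (\<phi>, y) \<in> P \<Longrightarrow> \<bar>y (T \<phi>) - y (S \<phi>)\<bar> < \<epsilon>"
    using in_WOT_closure_hatD[OF assms _ _ \<open>\<epsilon> > 0\<close>] by blast
  have "\<bar>T (dirac z0 x) g - g (f x)\<bar> < \<epsilon>" if "g \<in> G" for g
  proof -
    have "g \<in> Lip0 w0" using G(2) that by blast
    then have "S (dirac z0 x) g = g (f x)" using is_hat_dirac[OF \<open>is_hat z0 w0 f S\<close>] by simp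
    moreover have "(dirac z0 x, \<lambda>\<phi>. \<phi> g) \<in> P" unfolding P_def using that by blast
    ultimately show ?thesis using S by fastforce
  qed
  then show "\<exists>y. \<forall>g\<in>G. \<bar>T (dirac z0 x) g - g y\<bar> < \<epsilon>" by blast
qed

lemma SOT_closure_hat_imp_WOT_closure_hat:
  assumes T: "bounded_op z0 w0 T" and SOT: "in_SOT_closure_hat z0 w0 T"
  shows "in_WOT_closure_hat z0 w0 T"
  unfolding in_WOT_closure_hat_def
proof (intro allI impI; elim conjE)
  fix P and \<epsilon> :: real
  assume P: "finite P" "P \<subseteq> free z0 \<times> free_dual w0" and "\<epsilon> > 0"
  have "\<forall>y\<in>snd ` P. \<exists>C. 0 \<le> C \<and> (\<forall>\<psi>\<in>free w0. \<bar>y \<psi>\<bar> \<le> C * fnorm w0 \<psi>)"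
  proof
    fix y assume "y \<in> snd ` P"
    then have "y \<in> free_dual w0" using P(2) by auto
    then show "\<exists>C. 0 \<le> C \<and> (\<forall>\<psi>\<in>free w0. \<bar>y \<psi>\<bar> \<le> C * fnorm w0 \<psi>)"
      by (metis free_dual_bound)
  qed
  then obtain C where C: "\<forall>y\<in>snd ` P. 0 \<le> C y \<and> (\<forall>\<psi>\<in>free w0. \<bar>y \<psi>\<bar> \<le> C y * fnorm w0 \<psi>)"
    by (rule bchoice[THEN exE])
  define K where "K = (\<Sum>p\<in>P. C (snd p)) + 1"
  have C_lt_K: "C y < K" if y: "y \<in> snd ` P" for y
  proof -
    obtain p where "p \<in> P" "y = snd p" using y by blast
    then have "C y \<le> (\<Sum>p\<in>P. C (snd p))"
      using P(1) C by (auto intro: member_le_sum)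
    then show ?thesis unfolding K_def by simp
  qed
  have "finite (fst ` P)" using P(1) by simp
  moreover have "fst ` P \<subseteq> free z0" using P(2) by auto
  moreover have "K > 0" unfolding K_def using C by (simp add: add_nonneg_pos sum_nonneg)
  then have "\<epsilon> / K > 0" using \<open>\<epsilon> > 0\<close> by simp
  ultimately obtain f S where "f \<in> Lip0_maps z0 w0" and S: "is_hat z0 w0 f S"
    and close: "\<And>\<phi>. \<phi> \<in> fst ` P \<Longrightarrow> fnorm w0 (\<lambda>g. T \<phi> g - S \<phi> g) < \<epsilon> / K"
    by (rule in_SOT_closure_hatD[OF SOT]) blast+
  have "\<bar>y (T \<phi>) - y (S \<phi>)\<bar> < \<epsilon>" if \<phi>y: "(\<phi>, y) \<in> P" for \<phi> y
  proof -
    have \<phi>: "\<phi> \<in> free z0" and y: "y \<in> free_dual w0" using \<phi>y P(2) by auto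
    have y_snd: "y \<in> snd ` P" and \<phi>_fst: "\<phi> \<in> fst ` P" using \<phi>y by force+
    have T\<phi>: "T \<phi> \<in> free w0" and S\<phi>: "S \<phi> \<in> free w0"
      using bounded_op_free[OF T \<phi>] bounded_op_free[OF is_hat_bounded_op[OF S] \<phi>] .
    have "\<bar>y (T \<phi>) - y (S \<phi>)\<bar> = \<bar>y (\<lambda>g. T \<phi> g - S \<phi> g)\<bar>"
      by (simp add: free_dual_diff[OF y T\<phi> S\<phi>])
    also have "\<dots> \<le> C y * fnorm w0 (\<lambda>g. T \<phi> g - S \<phi> g)"
      using C y_snd free_diff[OF T\<phi> S\<phi>] by blast
    also have "\<dots> \<le> C y * (\<epsilon> / K)"
      using close[OF \<phi>_fst] C y_snd by (intro mult_left_mono) auto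
    also have "\<dots> < K * (\<epsilon> / K)"
      using C_lt_K[OF y_snd] \<open>\<epsilon> / K > 0\<close> by (intro mult_strict_right_mono)
    also have "\<dots> = \<epsilon>" using \<open>K > 0\<close> by simp
    finally show ?thesis .
  qed
  then show "\<exists>f S. f \<in> Lip0_maps z0 w0 \<and> is_hat z0 w0 f S \<and>
      (\<forall>(\<phi>, y)\<in>P. \<bar>y (T \<phi>) - y (S \<phi>)\<bar> < \<epsilon>)"
    using \<open>f \<in> Lip0_maps z0 w0\<close> S by blast
qed

lemma WOT_closure_hat_is_hat:
  fixes w0 :: "'b::complete_space"
  assumes T: "bounded_op z0 w0 T" and WOT: "in_WOT_closure_hat z0 w0 T"
  shows "\<exists>f\<in>Lip0_maps z0 w0. is_hat z0 w0 f T"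
  by (rule dirac_preserving_op_is_hat[OF T weakly_dirac_approximable_imp_dirac
        [OF bounded_op_free[OF T dirac_in_free] WOT_closure_hat_dirac_approximable[OF WOT]]])

theorem corollary6p4:
  fixes z0 :: "'a::complete_space" and w0 :: "'b::complete_space"
  shows "(\<forall>T. bounded_op z0 w0 T \<and> in_WOT_closure_hat z0 w0 T
            \<longrightarrow> (\<exists>f\<in>Lip0_maps z0 w0. is_hat z0 w0 f T))
       \<and> (\<forall>T. bounded_op z0 w0 T \<and> in_SOT_closure_hat z0 w0 T
            \<longrightarrow> (\<exists>f\<in>Lip0_maps z0 w0. is_hat z0 w0 f T))"
  using WOT_closure_hat_is_hat SOT_closure_hat_imp_WOT_closure_hat by blast

end
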